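(* Let $M$ be a pointed metric space and let $\mathcal U$ be a countably incomplete ultrafilter on a set $I$. Let $T\colon(\mathrm{Lip}_0(M))_{\mathcal U}\rightarrow \mathrm{Lip}_0(M_{\mathcal U})$ be the operator given by $T((f_i)_{\mathcal U})((x_i)_{\mathcal U})=\lim_{\mathcal U,i}f_i(x_i)$. The following are equivalent: (i) $M$ is uniformly discrete and bounded; (ii) $T$ is injective; (iii) $T$ is an isometry.
   Context: An ultrafilter $\mathcal U$ on $I$ is countably incomplete if there is a sequence $(I_n)_{n\in\mathbb N}$ in $\mathcal U$ with $I_{n+1}\subset I_n$ and $\bigcap_n I_n=\emptyset$. Ultrapower of a metric space: for a metric space $(M,d)$ with base point $0$, let $\ell_\infty(M)=\{(x_i)_{i\in I}\in M^I:\sup_i d(x_i,0)<\infty\}$ with pseudometric $d((x_i),(y_i))=\lim_{\mathcal U,i}d(x_i,y_i)$; $M_{\mathcal U}$ is the metric quotient identifying points at distance $0$, classes written $(x_i)_{\mathcal U}$, pointed by $(0)_{\mathcal U}$. For a Banach space $X$, $X_{\mathcal U}$ is the usual Banach ultrapower (base point $0$), with norm $\|(x_i)_{\mathcal U}\|=\lim_{\mathcal U}\|x_i\|$. $\mathrm{Lip}_0(M)$ is the Banach space of real-valued Lipschitz functions on $M$ vanishing at $0$ with norm the Lipschitz constant. $M$ is uniformly discrete if $\inf\{d(x,y):x\neq y\}>0$. *)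

theory Defs
  imports "HOL-Analysis.Analysis"
begin

text \<open>An ultrafilter on the index set I, where I is the universe of the type 'i.\<close>
definition is_ultrafilter :: "'i filter \<Rightarrow> bool" where
  "is_ultrafilter F \<longleftrightarrow> F \<noteq> bot \<and>
     (\<forall>P. eventually P F \<or> eventually (\<lambda>i. \<not> P i) F)"

definition countably_incomplete :: "'i filter \<Rightarrow> bool" where
  "countably_incomplete F \<longleftrightarrow>
     (\<exists>A :: nat \<Rightarrow> 'i set. (\<forall>n. eventually (\<lambda>i. i \<in> A n) F) \<and>
        (\<forall>n. A (Suc n) \<subseteq> A n) \<and> (\<Inter>n. A n) = {})"

definition lip_const :: "'a set \<Rightarrow> ('a \<Rightarrow> 'a \<Rightarrow> real) \<Rightarrow> ('a \<Rightarrow> real) \<Rightarrow> real" where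
  "lip_const S d f =
     Sup (insert 0 {\<bar>f x - f y\<bar> / d x y | x y. x \<in> S \<and> y \<in> S \<and> d x y \<noteq> 0})"

text \<open>Lip_0 of the pointed metric space (S, d, p): real Lipschitz functions on S
  vanishing at p (extended by 0 outside S so that equality is equality on S).\<close>
definition Lip0 :: "'a set \<Rightarrow> ('a \<Rightarrow> 'a \<Rightarrow> real) \<Rightarrow> 'a \<Rightarrow> ('a \<Rightarrow> real) set" where
  "Lip0 S d p = {f. f p = 0 \<and> (\<forall>x. x \<notin> S \<longrightarrow> f x = 0) \<and>
      (\<exists>L. \<forall>x\<in>S. \<forall>y\<in>S. \<bar>f x - f y\<bar> \<le> L * d x y)}"

definition lip_dist :: "'a set \<Rightarrow> ('a \<Rightarrow> 'a \<Rightarrow> real) \<Rightarrow> ('a \<Rightarrow> real) \<Rightarrow> ('a \<Rightarrow> real) \<Rightarrow> real" where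
  "lip_dist S d f g = lip_const S d (\<lambda>x. f x - g x)"

definition ult_linf :: "'a set \<Rightarrow> ('a \<Rightarrow> 'a \<Rightarrow> real) \<Rightarrow> 'a \<Rightarrow> ('i \<Rightarrow> 'a) set" where
  "ult_linf S d p = {x. (\<forall>i. x i \<in> S) \<and> (\<exists>B. \<forall>i. d (x i) p \<le> B)}"

definition ult_pdist :: "'i filter \<Rightarrow> ('a \<Rightarrow> 'a \<Rightarrow> real) \<Rightarrow> ('i \<Rightarrow> 'a) \<Rightarrow> ('i \<Rightarrow> 'a) \<Rightarrow> real" where
  "ult_pdist F d x y = Lim F (\<lambda>i. d (x i) (y i))"

definition ult_class :: "'i filter \<Rightarrow> 'a set \<Rightarrow> ('a \<Rightarrow> 'a \<Rightarrow> real) \<Rightarrow> 'a \<Rightarrow> ('i \<Rightarrow> 'a) \<Rightarrow> ('i \<Rightarrow> 'a) set" where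
  "ult_class F S d p x = {y \<in> ult_linf S d p. ult_pdist F d x y = 0}"

definition ult_space :: "'i filter \<Rightarrow> 'a set \<Rightarrow> ('a \<Rightarrow> 'a \<Rightarrow> real) \<Rightarrow> 'a \<Rightarrow> ('i \<Rightarrow> 'a) set set" where
  "ult_space F S d p = ult_class F S d p ` ult_linf S d p"

definition ult_base :: "'i filter \<Rightarrow> 'a set \<Rightarrow> ('a \<Rightarrow> 'a \<Rightarrow> real) \<Rightarrow> 'a \<Rightarrow> ('i \<Rightarrow> 'a) set" where
  "ult_base F S d p = ult_class F S d p (\<lambda>i. p)"

definition ult_dist :: "'i filter \<Rightarrow> ('a \<Rightarrow> 'a \<Rightarrow> real) \<Rightarrow> ('i \<Rightarrow> 'a) set \<Rightarrow> ('i \<Rightarrow> 'a) set \<Rightarrow> real" where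
  "ult_dist F d c1 c2 = ult_pdist F d (SOME x. x \<in> c1) (SOME y. y \<in> c2)"

abbreviation MU :: "'i filter \<Rightarrow> 'a::metric_space \<Rightarrow> ('i \<Rightarrow> 'a) set set" where
  "MU F z \<equiv> ult_space F UNIV dist z"

abbreviation dMU :: "'i filter \<Rightarrow> ('i \<Rightarrow> 'a::metric_space) set \<Rightarrow> ('i \<Rightarrow> 'a) set \<Rightarrow> real" where
  "dMU F \<equiv> ult_dist F dist"

abbreviation Lip0_MU :: "'i filter \<Rightarrow> 'a::metric_space \<Rightarrow> (('i \<Rightarrow> 'a) set \<Rightarrow> real) set" where
  "Lip0_MU F z \<equiv> Lip0 (MU F z) (dMU F) (ult_base F UNIV dist z)"

text \<open>The Banach ultrapower (Lip_0(M))_U, with its metric lim_U ||f_i - g_i||.\<close>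
abbreviation LipU :: "'i filter \<Rightarrow> 'a::metric_space \<Rightarrow> ('i \<Rightarrow> 'a \<Rightarrow> real) set set" where
  "LipU F z \<equiv> ult_space F (Lip0 UNIV dist z) (lip_dist UNIV dist) (\<lambda>_. 0)"

abbreviation dLipU :: "'i filter \<Rightarrow> ('i \<Rightarrow> 'a::metric_space \<Rightarrow> real) set \<Rightarrow> ('i \<Rightarrow> 'a \<Rightarrow> real) set \<Rightarrow> real" where
  "dLipU F \<equiv> ult_dist F (lip_dist UNIV dist)"

text \<open>The operator T((f_i)_U)((x_i)_U) = lim_U f_i(x_i), computed on representatives
  (and extended by 0 outside M_U, as for all elements of Lip0).\<close>
definition opT :: "'i filter \<Rightarrow> 'a::metric_space \<Rightarrow> ('i \<Rightarrow> 'a \<Rightarrow> real) set \<Rightarrow> ('i \<Rightarrow> 'a) set \<Rightarrow> real" where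
  "opT F z c \<xi> = (if \<xi> \<in> MU F z
      then Lim F (\<lambda>i. (SOME f. f \<in> c) i ((SOME x. x \<in> \<xi>) i)) else 0)"

definition uniformly_discrete :: "'a::metric_space set \<Rightarrow> bool" where
  "uniformly_discrete S \<longleftrightarrow> (\<exists>\<delta>>0. \<forall>x\<in>S. \<forall>y\<in>S. x \<noteq> y \<longrightarrow> \<delta> \<le> dist x y)"

end

theory Submission
  imports Defs
begin

(* T is nonexpansive: on representatives |f_i(x_i) - f_i(y_i)| <= ||f_i|| d(x_i, y_i), and limits
   along U preserve this. If M is uniformly discrete and bounded, every family (x_i) is bounded,
   and pairs (u_i, v_i) nearly norming f_i stay at distance >= delta, so ((u_i)_U, (v_i)_U) norms
   T((f_i)_U) up to epsilon: T is an isometry, hence injective. Conversely, countable incompleteness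
   gives r : I -> N tending to infinity along U. If M is unbounded, h_i = max(0, d(., 0) - r_i)
   vanishes eventually on every bounded family; if M is not uniformly discrete, h_i is a tent of
   height 1/(r_i + 1) around a point having a neighbour closer than that height. In both cases
   ||h_i|| >= 1/2 while T((h_i)_U) = 0, so T is not injective. *)

section \<open>Limits along an ultrafilter\<close>

lemma ultrafilter_not_bot: "is_ultrafilter F \<Longrightarrow> F \<noteq> bot"
  unfolding is_ultrafilter_def by blast

lemma ultrafilter_tendsto_Lim:
  fixes f :: "'i \<Rightarrow> 'b::t2_space"
  assumes U: "is_ultrafilter F" and "compact K" and "eventually (\<lambda>i. f i \<in> K) F"
  shows "(f \<longlongrightarrow> Lim F f) F"
proof -
  let ?G = "filtermap f F"
  have "?G \<noteq> bot" "eventually (\<lambda>y. y \<in> K) ?G"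
    using ultrafilter_not_bot[OF U] assms(3) by (simp_all add: filtermap_bot_iff eventually_filtermap)
  then obtain x where x: "inf (nhds x) ?G \<noteq> bot"
    using \<open>compact K\<close> unfolding compact_filter by blast
  \<comment> \<open>A cluster point of the image filter is a limit, since F decides every set.\<close>
  have "(f \<longlongrightarrow> x) F"
  proof (rule topological_tendstoI)
    fix S assume S: "open S" "x \<in> S"
    show "eventually (\<lambda>i. f i \<in> S) F"
    proof (rule ccontr)
      assume "\<not> ?thesis"
      then have "eventually (\<lambda>y. y \<notin> S) ?G"
        using U unfolding is_ultrafilter_def eventually_filtermap by blast
      moreover have "eventually (\<lambda>y. y \<in> S) (nhds x)"
        using S eventually_nhds by blast
      ultimately have "eventually (\<lambda>y. False) (inf (nhds x) ?G)"
        unfolding eventually_inf by blast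
      with x show False by (simp add: eventually_False)
    qed
  qed
  then show ?thesis
    using tendsto_Lim ultrafilter_not_bot[OF U] by metis
qed

lemma ultrafilter_tendsto_Lim_real:
  fixes f :: "'i \<Rightarrow> real"
  assumes "is_ultrafilter F" and "\<forall>i. \<bar>f i\<bar> \<le> B"
  shows "(f \<longlongrightarrow> Lim F f) F"
  using assms by (intro ultrafilter_tendsto_Lim[OF _ compact_Icc[of "-B" B]] always_eventually)
    (auto simp: abs_le_iff minus_le_iff)

lemma countably_incomplete_filterlim_at_top:
  assumes "countably_incomplete F"
  obtains r :: "'i \<Rightarrow> nat" where "filterlim r at_top F"
proof -
  obtain A :: "nat \<Rightarrow> 'i set" where A: "\<forall>n. eventually (\<lambda>i. i \<in> A n) F"
    and decreasing: "\<forall>n. A (Suc n) \<subseteq> A n" and empty: "(\<Inter>n. A n) = {}"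
    using assms unfolding countably_incomplete_def by blast
  define r where "r i = (LEAST n. i \<notin> A n)" for i
  have le: "N \<le> r i" if "i \<in> A N" for i N
  proof (rule ccontr)
    assume "\<not> N \<le> r i"
    then have "A N \<subseteq> A (r i)"
      using lift_Suc_antimono_le[of A "r i" N] decreasing by auto
    moreover have "i \<notin> A (r i)"
      unfolding r_def by (rule LeastI_ex) (use empty in blast)
    ultimately show False using that by blast
  qed
  have "filterlim r at_top F"
    unfolding filterlim_at_top
  proof
    fix N
    show "eventually (\<lambda>i. N \<le> r i) F"
      using A[rule_format, of N] by (rule eventually_mono) (rule le)
  qed
  then show thesis by (rule that)
qed

section \<open>Ultrapowers of pointed pseudometric spaces\<close>

locale pseudometric_ultrapower =
  fixes F :: "'i filter" and S :: "'a set" and d :: "'a \<Rightarrow> 'a \<Rightarrow> real" and p :: 'a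
  assumes ultrafilter: "is_ultrafilter F" and base_in: "p \<in> S"
    and refl: "\<And>x. x \<in> S \<Longrightarrow> d x x = 0"
    and sym: "\<And>x y. x \<in> S \<Longrightarrow> y \<in> S \<Longrightarrow> d x y = d y x"
    and triangle: "\<And>x y w. x \<in> S \<Longrightarrow> y \<in> S \<Longrightarrow> w \<in> S \<Longrightarrow> d x w \<le> d x y + d y w"
begin

lemma nonneg: "x \<in> S \<Longrightarrow> y \<in> S \<Longrightarrow> 0 \<le> d x y"
  using triangle[of x y x] refl[of x] sym[of x y] by auto

lemma not_bot: "F \<noteq> bot"
  by (rule ultrafilter_not_bot[OF ultrafilter])

lemma ult_linf_in: "x \<in> ult_linf S d p \<Longrightarrow> x i \<in> S"
  unfolding ult_linf_def by auto

lemma tendsto_ult_pdist: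
  assumes x: "x \<in> ult_linf S d p" and y: "y \<in> ult_linf S d p"
  shows "((\<lambda>i. d (x i) (y i)) \<longlongrightarrow> ult_pdist F d x y) F"
proof -
  obtain B\<^sub>x B\<^sub>y where Bx: "\<forall>i. d (x i) p \<le> B\<^sub>x" and By: "\<forall>i. d (y i) p \<le> B\<^sub>y"
    using x y unfolding ult_linf_def by blast
  have "\<bar>d (x i) (y i)\<bar> \<le> B\<^sub>x + B\<^sub>y" for i
  proof -
    have xi: "x i \<in> S" and yi: "y i \<in> S"
      using ult_linf_in[OF x] ult_linf_in[OF y] by auto
    have "d (x i) (y i) \<le> d (x i) p + d p (y i)"
      using triangle[OF xi base_in yi] .
    also have "\<dots> = d (x i) p + d (y i) p"
      using sym[OF base_in yi] by simp
    finally show ?thesis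
      using nonneg[OF xi yi] Bx[rule_format, of i] By[rule_format, of i] by simp
  qed
  then show ?thesis
    unfolding ult_pdist_def by (blast intro: ultrafilter_tendsto_Lim_real[OF ultrafilter])
qed

lemma ult_pdist_nonneg:
  "x \<in> ult_linf S d p \<Longrightarrow> y \<in> ult_linf S d p \<Longrightarrow> 0 \<le> ult_pdist F d x y"
  by (rule tendsto_lowerbound[OF tendsto_ult_pdist])
    (auto intro: always_eventually nonneg ult_linf_in simp: not_bot)

lemma ult_pdist_sym:
  "x \<in> ult_linf S d p \<Longrightarrow> y \<in> ult_linf S d p \<Longrightarrow> ult_pdist F d x y = ult_pdist F d y x"
  unfolding ult_pdist_def by (simp add: sym ult_linf_in)

lemma ult_pdist_triangle:
  assumes "x \<in> ult_linf S d p" "y \<in> ult_linf S d p" "w \<in> ult_linf S d p"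
  shows "ult_pdist F d x w \<le> ult_pdist F d x y + ult_pdist F d y w"
  by (rule tendsto_le[OF not_bot tendsto_add[OF tendsto_ult_pdist[OF assms(1,2)]
        tendsto_ult_pdist[OF assms(2,3)]] tendsto_ult_pdist[OF assms(1,3)]])
    (auto intro!: always_eventually triangle
      ult_linf_in[OF assms(1)] ult_linf_in[OF assms(2)] ult_linf_in[OF assms(3)])

lemma ult_pdist_refl:
  assumes "x \<in> ult_linf S d p"
  shows "ult_pdist F d x x = 0"
proof -
  have "(\<lambda>i. d (x i) (x i)) = (\<lambda>i. 0)"
    using refl ult_linf_in[OF assms] by blast
  then show ?thesis
    unfolding ult_pdist_def using not_bot by (simp add: tendsto_Lim)
qed

lemma ult_pdist_cong:
  assumes x: "x \<in> ult_linf S d p" "x' \<in> ult_linf S d p" "ult_pdist F d x x' = 0"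
    and y: "y \<in> ult_linf S d p" "y' \<in> ult_linf S d p" "ult_pdist F d y y' = 0"
  shows "ult_pdist F d x' y' = ult_pdist F d x y"
  using ult_pdist_triangle[OF x(2) x(1) y(1)] ult_pdist_triangle[OF x(2) y(1) y(2)]
    ult_pdist_triangle[OF x(1) x(2) y(1)] ult_pdist_triangle[OF x(2) y(2) y(1)]
    ult_pdist_sym[OF x(1,2)] ult_pdist_sym[OF y(1,2)] x(3) y(3)
  by linarith

lemma ult_class_eq_iff:
  assumes "x \<in> ult_linf S d p" "y \<in> ult_linf S d p"
  shows "ult_class F S d p x = ult_class F S d p y \<longleftrightarrow> ult_pdist F d x y = 0"
proof
  assume "ult_class F S d p x = ult_class F S d p y"
  then show "ult_pdist F d x y = 0"
    using assms ult_pdist_refl unfolding ult_class_def by blast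
next
  assume xy: "ult_pdist F d x y = 0"
  have "ult_pdist F d y w = ult_pdist F d x w" if "w \<in> ult_linf S d p" for w
    by (rule ult_pdist_cong[OF assms xy that that ult_pdist_refl[OF that]])
  then show "ult_class F S d p x = ult_class F S d p y"
    unfolding ult_class_def by auto
qed

lemma some_in_ult_class:
  assumes "x \<in> ult_linf S d p"
  shows "(SOME y. y \<in> ult_class F S d p x) \<in> ult_linf S d p"
    and "ult_pdist F d x (SOME y. y \<in> ult_class F S d p x) = 0"
proof -
  have "x \<in> ult_class F S d p x"
    using assms ult_pdist_refl unfolding ult_class_def by blast
  then have "(SOME y. y \<in> ult_class F S d p x) \<in> ult_class F S d p x"
    by (rule someI[where P = "\<lambda>y. y \<in> ult_class F S d p x"])
  then show "(SOME y. y \<in> ult_class F S d p x) \<in> ult_linf S d p"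
    and "ult_pdist F d x (SOME y. y \<in> ult_class F S d p x) = 0"
    unfolding ult_class_def by auto
qed

lemma ult_dist_ult_class:
  assumes "x \<in> ult_linf S d p" "y \<in> ult_linf S d p"
  shows "ult_dist F d (ult_class F S d p x) (ult_class F S d p y) = ult_pdist F d x y"
  unfolding ult_dist_def
  by (rule ult_pdist_cong[OF assms(1) some_in_ult_class[OF assms(1)] assms(2) some_in_ult_class[OF assms(2)]])

lemma ult_spaceE:
  assumes "\<xi> \<in> ult_space F S d p"
  obtains x where "x \<in> ult_linf S d p" "\<xi> = ult_class F S d p x"
  using assms unfolding ult_space_def by blast

lemma ult_dist_nonneg:
  assumes "\<xi> \<in> ult_space F S d p" "\<eta> \<in> ult_space F S d p"
  shows "0 \<le> ult_dist F d \<xi> \<eta>"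
  using assms by (elim ult_spaceE) (simp add: ult_dist_ult_class ult_pdist_nonneg)

lemma ult_dist_eq_0_iff:
  assumes "\<xi> \<in> ult_space F S d p" "\<eta> \<in> ult_space F S d p"
  shows "ult_dist F d \<xi> \<eta> = 0 \<longleftrightarrow> \<xi> = \<eta>"
  using assms by (elim ult_spaceE) (simp add: ult_dist_ult_class ult_class_eq_iff)

end

section \<open>Lipschitz constants\<close>

context
  fixes S :: "'a set" and d :: "'a \<Rightarrow> 'a \<Rightarrow> real"
  assumes d_nonneg: "\<And>x y. x \<in> S \<Longrightarrow> y \<in> S \<Longrightarrow> 0 \<le> d x y"
begin

lemma lipschitz_ratio_le:
  assumes "\<forall>x\<in>S. \<forall>y\<in>S. \<bar>f x - f y\<bar> \<le> K * d x y" "x \<in> S" "y \<in> S" "d x y \<noteq> 0"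
  shows "\<bar>f x - f y\<bar> / d x y \<le> K"
  using assms d_nonneg[of x y] by (simp add: divide_le_eq)

lemma bdd_above_lip_ratios:
  assumes "\<forall>x\<in>S. \<forall>y\<in>S. \<bar>f x - f y\<bar> \<le> K * d x y"
  shows "bdd_above (insert 0 {\<bar>f x - f y\<bar> / d x y | x y. x \<in> S \<and> y \<in> S \<and> d x y \<noteq> 0})"
  using lipschitz_ratio_le[OF assms] by (intro bdd_aboveI[of _ "max K 0"]) force

lemma lip_const_nonneg:
  assumes "\<forall>x\<in>S. \<forall>y\<in>S. \<bar>f x - f y\<bar> \<le> K * d x y"
  shows "0 \<le> lip_const S d f"
  unfolding lip_const_def by (rule cSup_upper[OF _ bdd_above_lip_ratios[OF assms]]) simp

lemma lip_const_bound:
  assumes "\<forall>x\<in>S. \<forall>y\<in>S. \<bar>f x - f y\<bar> \<le> K * d x y" "x \<in> S" "y \<in> S"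
  shows "\<bar>f x - f y\<bar> \<le> lip_const S d f * d x y"
proof (cases "d x y = 0")
  case True
  then show ?thesis using assms by force
next
  case False
  have "\<bar>f x - f y\<bar> / d x y \<le> lip_const S d f"
    unfolding lip_const_def
    by (rule cSup_upper[OF _ bdd_above_lip_ratios[OF assms(1)]]) (use assms False in blast)
  then show ?thesis
    using False d_nonneg[OF assms(2,3)] by (simp add: divide_le_eq)
qed

lemma lip_const_least:
  assumes "0 \<le> K" "\<forall>x\<in>S. \<forall>y\<in>S. \<bar>f x - f y\<bar> \<le> K * d x y"
  shows "lip_const S d f \<le> K"
  unfolding lip_const_def using assms lipschitz_ratio_le[OF assms(2)] by (intro cSup_least) auto

lemma lip_const_approx:
  assumes "\<forall>x\<in>S. \<forall>y\<in>S. \<bar>f x - f y\<bar> \<le> K * d x y" "0 < \<epsilon>"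
    and "x\<^sub>0 \<in> S" "y\<^sub>0 \<in> S" "d x\<^sub>0 y\<^sub>0 \<noteq> 0"
  shows "\<exists>x\<in>S. \<exists>y\<in>S. d x y \<noteq> 0 \<and> (lip_const S d f - \<epsilon>) * d x y \<le> \<bar>f x - f y\<bar>"
proof (cases "lip_const S d f - \<epsilon> < 0")
  case True
  then have "(lip_const S d f - \<epsilon>) * d x\<^sub>0 y\<^sub>0 \<le> \<bar>f x\<^sub>0 - f y\<^sub>0\<bar>"
    using mult_nonpos_nonneg[of "lip_const S d f - \<epsilon>" "d x\<^sub>0 y\<^sub>0"] d_nonneg[OF assms(3,4)]
    by linarith
  then show ?thesis using assms(3-5) by blast
next
  case False
  have "lip_const S d f - \<epsilon> < lip_const S d f"
    using assms(2) by simp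
  then obtain r where r: "r \<in> insert 0 {\<bar>f x - f y\<bar> / d x y | x y. x \<in> S \<and> y \<in> S \<and> d x y \<noteq> 0}"
    and less: "lip_const S d f - \<epsilon> < r"
    unfolding lip_const_def
    using less_cSup_iff[OF insert_not_empty bdd_above_lip_ratios[OF assms(1)]] by blast
  with False obtain x y where xy: "x \<in> S" "y \<in> S" "d x y \<noteq> 0" "r = \<bar>f x - f y\<bar> / d x y"
    by auto
  have "0 < d x y"
    using d_nonneg[OF xy(1,2)] xy(3) by linarith
  then have "(lip_const S d f - \<epsilon>) * d x y \<le> \<bar>f x - f y\<bar>"
    using less xy(4) by (simp add: less_divide_eq)
  with xy show ?thesis by blast
qed

end

lemma lip_const_eq_0I:
  assumes "\<forall>x\<in>S. \<forall>y\<in>S. d x y = 0 \<or> f x = f y"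
  shows "lip_const S d f = 0"
proof -
  have "{\<bar>f x - f y\<bar> / d x y | x y. x \<in> S \<and> y \<in> S \<and> d x y \<noteq> 0} \<subseteq> {0}"
    using assms by force
  then have ratios: "insert 0 {\<bar>f x - f y\<bar> / d x y | x y. x \<in> S \<and> y \<in> S \<and> d x y \<noteq> 0} = {0}"
    by blast
  show ?thesis
    unfolding lip_const_def ratios by simp
qed

section \<open>The space Lip0 of a pointed metric space\<close>

abbreviation lip_norm :: "('a::metric_space \<Rightarrow> real) \<Rightarrow> real" where
  "lip_norm f \<equiv> lip_dist UNIV dist f (\<lambda>_. 0)"

lemma zero_in_Lip0: "(\<lambda>_. 0) \<in> Lip0 UNIV dist z"
  unfolding Lip0_def by (auto intro: exI[of _ 0])

lemma Lip0_base: "f \<in> Lip0 UNIV dist z \<Longrightarrow> f z = 0"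
  unfolding Lip0_def by auto

lemma Lip0_diff_lipschitz:
  assumes "f \<in> Lip0 UNIV dist z" "g \<in> Lip0 UNIV dist z"
  obtains L where "\<forall>x\<in>UNIV. \<forall>y\<in>UNIV. \<bar>(f x - g x) - (f y - g y)\<bar> \<le> L * dist x y"
proof -
  obtain L\<^sub>f L\<^sub>g where Lf: "\<forall>x y. \<bar>f x - f y\<bar> \<le> L\<^sub>f * dist x y"
    and Lg: "\<forall>x y. \<bar>g x - g y\<bar> \<le> L\<^sub>g * dist x y"
    using assms unfolding Lip0_def by auto
  have "\<bar>(f x - g x) - (f y - g y)\<bar> \<le> (L\<^sub>f + L\<^sub>g) * dist x y" for x y
  proof -
    have "\<bar>(f x - g x) - (f y - g y)\<bar> \<le> \<bar>f x - f y\<bar> + \<bar>g x - g y\<bar>"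
      by linarith
    also have "\<dots> \<le> L\<^sub>f * dist x y + L\<^sub>g * dist x y"
      using Lf Lg by (intro add_mono) auto
    finally show ?thesis
      by (simp add: distrib_right)
  qed
  then show ?thesis using that by blast
qed

lemma lip_dist_bound:
  assumes "f \<in> Lip0 UNIV dist z" "g \<in> Lip0 UNIV dist z"
  shows "\<bar>(f x - g x) - (f y - g y)\<bar> \<le> lip_dist UNIV dist f g * dist x y"
proof -
  obtain L where "\<forall>x\<in>UNIV. \<forall>y\<in>UNIV. \<bar>(f x - g x) - (f y - g y)\<bar> \<le> L * dist x y"
    using Lip0_diff_lipschitz[OF assms] .
  from lip_const_bound[of UNIV dist, OF zero_le_dist this] show ?thesis
    unfolding lip_dist_def by simp
qed

lemma lip_dist_nonneg:
  assumes "f \<in> Lip0 UNIV dist z" "g \<in> Lip0 UNIV dist z"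
  shows "0 \<le> lip_dist UNIV dist f g"
proof -
  obtain L where "\<forall>x\<in>UNIV. \<forall>y\<in>UNIV. \<bar>(f x - g x) - (f y - g y)\<bar> \<le> L * dist x y"
    using Lip0_diff_lipschitz[OF assms] .
  from lip_const_nonneg[of UNIV dist, OF zero_le_dist this] show ?thesis
    unfolding lip_dist_def .
qed

lemma lip_dist_le:
  assumes "0 \<le> K" "\<forall>x y. \<bar>(f x - g x) - (f y - g y)\<bar> \<le> K * dist x y"
  shows "lip_dist UNIV dist f g \<le> K"
  unfolding lip_dist_def using assms by (intro lip_const_least) auto

lemma lip_dist_approx:
  fixes f g :: "'a::metric_space \<Rightarrow> real" and u\<^sub>0 v\<^sub>0 :: 'a
  assumes "f \<in> Lip0 UNIV dist z" "g \<in> Lip0 UNIV dist z" "0 < \<epsilon>" "u\<^sub>0 \<noteq> v\<^sub>0"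
  shows "\<exists>u v. u \<noteq> v \<and> (lip_dist UNIV dist f g - \<epsilon>) * dist u v \<le> \<bar>(f u - g u) - (f v - g v)\<bar>"
proof -
  obtain L where "\<forall>x\<in>UNIV. \<forall>y\<in>UNIV. \<bar>(f x - g x) - (f y - g y)\<bar> \<le> L * dist x y"
    using Lip0_diff_lipschitz[OF assms(1,2)] .
  moreover have "dist u\<^sub>0 v\<^sub>0 \<noteq> 0"
    using assms(4) by simp
  ultimately show ?thesis
    using lip_const_approx[of UNIV dist, OF zero_le_dist _ assms(3) UNIV_I UNIV_I]
    unfolding lip_dist_def by auto
qed

lemma lip_norm_leI:
  assumes "f z = 0" "0 \<le> C" "\<And>x y. \<bar>f x - f y\<bar> \<le> C * dist x y"
  shows "f \<in> Lip0 UNIV dist z" "lip_norm f \<le> C"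
  using assms unfolding Lip0_def by (auto intro!: lip_dist_le)

lemma lip_norm_geI:
  assumes "f \<in> Lip0 UNIV dist z" "u \<noteq> v" "c * dist u v \<le> \<bar>f u - f v\<bar>"
  shows "c \<le> lip_norm f"
proof -
  have "c * dist u v \<le> lip_norm f * dist u v"
    using lip_dist_bound[OF assms(1) zero_in_Lip0, of u v] assms(3) by simp
  then show ?thesis
    using assms(2) by (simp add: mult_le_cancel_right)
qed

lemma abs_le_lip_norm_dist:
  assumes "f \<in> Lip0 UNIV dist z"
  shows "\<bar>f x\<bar> \<le> lip_norm f * dist x z"
  using lip_dist_bound[OF assms zero_in_Lip0, of x z] Lip0_base[OF assms] by simp

lemma lip_dist_eq_0_if_subsingleton:
  fixes f g :: "'a::metric_space \<Rightarrow> real"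
  assumes "\<forall>u v::'a. u = v"
  shows "lip_dist UNIV dist f g = 0"
proof -
  have dist_0: "dist x y = 0" for x y :: 'a
    using assms[rule_format, of x y] by simp
  show ?thesis
    unfolding lip_dist_def by (intro lip_const_eq_0I ballI disjI1) (rule dist_0)
qed

lemma ult_linf_if_bounded:
  fixes z :: "'a::metric_space"
  assumes "bounded (UNIV::'a set)"
  shows "x \<in> ult_linf UNIV dist z"
proof -
  obtain R where "\<forall>y. dist y z \<le> R"
    using assms unfolding bounded_any_center[of _ z] by (auto simp: dist_commute)
  then show ?thesis
    unfolding ult_linf_def by blast
qed

lemma pseudometric_ultrapower_Lip0:
  assumes "is_ultrafilter F"
  shows "pseudometric_ultrapower F (Lip0 UNIV dist z) (lip_dist UNIV dist) (\<lambda>_. 0)"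
proof
  fix f g h assume f: "f \<in> Lip0 UNIV dist z" and g: "g \<in> Lip0 UNIV dist z"
    and h: "h \<in> Lip0 UNIV dist z"
  show "lip_dist UNIV dist f f = 0"
    unfolding lip_dist_def by (simp add: lip_const_eq_0I)
  show "lip_dist UNIV dist f g = lip_dist UNIV dist g f"
    using lip_dist_bound[OF f g] lip_dist_bound[OF g f] lip_dist_nonneg[OF f g] lip_dist_nonneg[OF g f]
    by (intro antisym lip_dist_le) (auto simp: abs_minus_commute algebra_simps)
  have "\<bar>(f x - h x) - (f y - h y)\<bar>
      \<le> (lip_dist UNIV dist f g + lip_dist UNIV dist g h) * dist x y" for x y
    using lip_dist_bound[OF f g, of x y] lip_dist_bound[OF g h, of x y] by (simp add: algebra_simps)
  then show "lip_dist UNIV dist f h \<le> lip_dist UNIV dist f g + lip_dist UNIV dist g h"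
    using lip_dist_nonneg[OF f g] lip_dist_nonneg[OF g h] by (intro lip_dist_le) auto
qed (use assms zero_in_Lip0 in auto)

lemma pseudometric_ultrapower_metric:
  "is_ultrafilter F \<Longrightarrow> pseudometric_ultrapower F UNIV dist z"
  by unfold_locales (auto simp: dist_commute dist_triangle)

section \<open>The operator T\<close>

text \<open>Under this condition (h_i)_U is a nonzero element of the kernel of T.\<close>
definition annihilated_family :: "'i filter \<Rightarrow> 'a::metric_space \<Rightarrow> ('i \<Rightarrow> 'a \<Rightarrow> real) \<Rightarrow> bool" where
  "annihilated_family F z h \<longleftrightarrow>
     (\<forall>i. h i \<in> Lip0 UNIV dist z \<and> 1/2 \<le> lip_norm (h i) \<and> lip_norm (h i) \<le> 1) \<and>
     (\<forall>x\<in>ult_linf UNIV dist z. ((\<lambda>i. h i (x i)) \<longlongrightarrow> 0) F)"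

lemma annihilated_family_if_unbounded:
  fixes z :: "'a::metric_space" and r :: "'i \<Rightarrow> nat"
  assumes r: "filterlim r at_top F" and unbounded: "\<not> bounded (UNIV::'a set)"
  shows "\<exists>h. annihilated_family F z h"
proof -
  define h where "h i x = max 0 (dist x z - real (r i))" for i x
  have "h i z = 0" for i
    unfolding h_def by simp
  moreover have "\<bar>h i x - h i y\<bar> \<le> 1 * dist x y" for i x y
    using abs_dist_diff_le[of x z y] unfolding h_def by (simp add: dist_commute)
  ultimately have lip: "h i \<in> Lip0 UNIV dist z" "lip_norm (h i) \<le> 1" for i
    by (rule lip_norm_leI[OF _ zero_le_one])+
  have norm: "1/2 \<le> lip_norm (h i)" for i
  proof -
    obtain u where u: "2 * real (r i) + 1 < dist u z"
      using unbounded unfolding bounded_any_center[of _ z] by (metis UNIV_I dist_commute not_le)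
    then have "u \<noteq> z" and "1/2 * dist u z \<le> \<bar>h i u - h i z\<bar>"
      unfolding h_def by auto
    then show ?thesis by (rule lip_norm_geI[OF lip(1)])
  qed
  have "((\<lambda>i. h i (x i)) \<longlongrightarrow> 0) F" if x: "x \<in> ult_linf UNIV dist z" for x
  proof -
    obtain B where B: "\<forall>i. dist (x i) z \<le> B"
      using x unfolding ult_linf_def by blast
    have "filterlim (\<lambda>i. real (r i)) at_top F"
      by (rule filterlim_compose[OF filterlim_real_sequentially r])
    then have "eventually (\<lambda>i. B \<le> real (r i)) F"
      unfolding filterlim_at_top by blast
    then have "eventually (\<lambda>i. h i (x i) = 0) F"
    proof (rule eventually_mono)
      fix i assume "B \<le> real (r i)"
      with B[rule_format, of i] show "h i (x i) = 0"
        unfolding h_def by (simp add: max_def)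
    qed
    then show ?thesis by (rule tendsto_eventually)
  qed
  with lip norm show ?thesis
    unfolding annihilated_family_def by blast
qed

lemma annihilated_family_if_not_uniformly_discrete:
  fixes z :: "'a::metric_space" and r :: "'i \<Rightarrow> nat"
  assumes r: "filterlim r at_top F" and "\<not> uniformly_discrete (UNIV::'a set)"
  shows "\<exists>h. annihilated_family F z h"
proof -
  define e where "e i = inverse (1 + real (r i))" for i
  have e_pos: "0 < e i" for i
    unfolding e_def by simp
  have e_null: "(e \<longlongrightarrow> 0) F"
    unfolding e_def
    by (intro tendsto_inverse_0_at_top filterlim_tendsto_add_at_top[OF tendsto_const]
        filterlim_compose[OF filterlim_real_sequentially r])
  have "\<exists>u v::'a. u \<noteq> v \<and> dist u v < e i" for i
    using assms(2) e_pos unfolding uniformly_discrete_def by (meson not_le)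
  then obtain u v :: "'i \<Rightarrow> 'a" where uv: "\<And>i. u i \<noteq> v i" "\<And>i. dist (u i) (v i) < e i"
    by metis
  define h where "h i x = max 0 (e i - dist x (u i)) - max 0 (e i - dist z (u i))" for i x
  have "h i z = 0" for i
    unfolding h_def by simp
  moreover have "\<bar>h i x - h i y\<bar> \<le> 1 * dist x y" for i x y
    using abs_dist_diff_le[of x "u i" y] unfolding h_def by (simp add: dist_commute)
  ultimately have lip: "h i \<in> Lip0 UNIV dist z" "lip_norm (h i) \<le> 1" for i
    by (rule lip_norm_leI[OF _ zero_le_one])+
  have norm: "1/2 \<le> lip_norm (h i)" for i
  proof -
    have "1 * dist (u i) (v i) \<le> \<bar>h i (u i) - h i (v i)\<bar>"
      using uv(2)[of i] e_pos[of i] unfolding h_def by (simp add: dist_commute)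
    then have "1 \<le> lip_norm (h i)"
      by (rule lip_norm_geI[OF lip(1) uv(1)])
    then show ?thesis by simp
  qed
  have tent_bound: "\<bar>max 0 (c - a) - max 0 (c - b)\<bar> \<le> c" if "0 \<le> a" "0 \<le> b" "0 < c"
    for a b c :: real
    using that by (simp add: max_def abs_if)
  have "\<bar>h i x\<bar> \<le> e i" for i x
    unfolding h_def by (rule tent_bound[OF zero_le_dist zero_le_dist e_pos])
  then have "((\<lambda>i. h i (x i)) \<longlongrightarrow> 0) F" for x
    by (intro Lim_null_comparison[OF always_eventually e_null]) simp
  with lip norm show ?thesis
    unfolding annihilated_family_def by blast
qed

locale Lip0_ultrapower =
  fixes F :: "'i filter" and z :: "'a::metric_space"
  assumes ultrafilter: "is_ultrafilter F"
begin

sublocale M: pseudometric_ultrapower F "UNIV::'a set" dist z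
  by (rule pseudometric_ultrapower_metric[OF ultrafilter])

sublocale L: pseudometric_ultrapower F "Lip0 UNIV dist z" "lip_dist UNIV dist" "\<lambda>_::'a. 0::real"
  by (rule pseudometric_ultrapower_Lip0[OF ultrafilter])

abbreviation "T \<equiv> opT F z"
abbreviation "linf_M \<equiv> ult_linf (UNIV::'a set) dist z"
abbreviation "cls_M \<equiv> ult_class F (UNIV::'a set) dist z"
abbreviation "linf_L \<equiv> ult_linf (Lip0 UNIV dist z) (lip_dist UNIV dist) (\<lambda>_::'a. 0::real)"
abbreviation "cls_L \<equiv> ult_class F (Lip0 UNIV dist z) (lip_dist UNIV dist) (\<lambda>_::'a. 0::real)"

lemma tendsto_Lim_eval:
  assumes f: "f \<in> linf_L" and x: "x \<in> linf_M"
  shows "((\<lambda>i. f i (x i)) \<longlongrightarrow> Lim F (\<lambda>i. f i (x i))) F"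
proof -
  obtain B\<^sub>f B\<^sub>x where Bf: "\<forall>i. lip_norm (f i) \<le> B\<^sub>f" and Bx: "\<forall>i. dist (x i) z \<le> B\<^sub>x"
    using f x unfolding ult_linf_def by blast
  have "\<bar>f i (x i)\<bar> \<le> B\<^sub>f * B\<^sub>x" for i
  proof -
    have fi: "f i \<in> Lip0 UNIV dist z"
      by (rule L.ult_linf_in[OF f])
    have "0 \<le> B\<^sub>f"
      using lip_dist_nonneg[OF fi zero_in_Lip0] Bf by (meson order_trans)
    have "\<bar>f i (x i)\<bar> \<le> lip_norm (f i) * dist (x i) z"
      by (rule abs_le_lip_norm_dist[OF fi])
    also have "\<dots> \<le> B\<^sub>f * B\<^sub>x"
      using Bf Bx \<open>0 \<le> B\<^sub>f\<close> by (intro mult_mono) auto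
    finally show ?thesis .
  qed
  then show ?thesis
    by (intro ultrafilter_tendsto_Lim_real[OF ultrafilter]) blast
qed

lemma tendsto_eval_cong:
  assumes f: "f \<in> linf_L" "f' \<in> linf_L" "ult_pdist F (lip_dist UNIV dist) f f' = 0"
    and x: "x \<in> linf_M" "x' \<in> linf_M" "ult_pdist F dist x x' = 0"
  shows "((\<lambda>i. f' i (x' i) - f i (x i)) \<longlongrightarrow> 0) F"
proof -
  obtain B B\<^sub>x where B: "\<forall>i. lip_norm (f' i) \<le> B" and Bx: "\<forall>i. dist (x i) z \<le> B\<^sub>x"
    using f(2) x(1) unfolding ult_linf_def by blast
  have bound: "\<bar>f' i (x' i) - f i (x i)\<bar>
      \<le> B * dist (x' i) (x i) + lip_dist UNIV dist (f' i) (f i) * B\<^sub>x" for i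
  proof -
    have fi: "f i \<in> Lip0 UNIV dist z" and fi': "f' i \<in> Lip0 UNIV dist z"
      using L.ult_linf_in[OF f(1)] L.ult_linf_in[OF f(2)] by auto
    have "\<bar>f' i (x' i) - f' i (x i)\<bar> \<le> lip_norm (f' i) * dist (x' i) (x i)"
      using lip_dist_bound[OF fi' zero_in_Lip0, of "x' i" "x i"] by simp
    also have "\<dots> \<le> B * dist (x' i) (x i)"
      using B by (intro mult_right_mono) auto
    finally have "\<bar>f' i (x' i) - f' i (x i)\<bar> \<le> B * dist (x' i) (x i)" .
    moreover have "\<bar>f' i (x i) - f i (x i)\<bar> \<le> lip_dist UNIV dist (f' i) (f i) * dist (x i) z"
      using lip_dist_bound[OF fi' fi, of "x i" z] by (simp add: Lip0_base[OF fi] Lip0_base[OF fi'])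
    moreover have "\<dots> \<le> lip_dist UNIV dist (f' i) (f i) * B\<^sub>x"
      using Bx lip_dist_nonneg[OF fi' fi] by (intro mult_left_mono) auto
    ultimately show ?thesis by linarith
  qed
  have "((\<lambda>i. dist (x' i) (x i)) \<longlongrightarrow> 0) F"
    using M.tendsto_ult_pdist[OF x(2,1)] M.ult_pdist_sym[OF x(1,2)] x(3) by simp
  moreover have "((\<lambda>i. lip_dist UNIV dist (f' i) (f i)) \<longlongrightarrow> 0) F"
    using L.tendsto_ult_pdist[OF f(2,1)] L.ult_pdist_sym[OF f(1,2)] f(3) by simp
  ultimately have "((\<lambda>i. B * dist (x' i) (x i) + lip_dist UNIV dist (f' i) (f i) * B\<^sub>x) \<longlongrightarrow> 0) F"
    using tendsto_add[OF tendsto_mult_right_zero tendsto_mult_left_zero] by fastforce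
  then show ?thesis
    by (rule Lim_null_comparison[OF always_eventually, rotated]) (use bound in simp)
qed

lemma tendsto_opT:
  assumes f: "f \<in> linf_L" and x: "x \<in> linf_M"
  shows "((\<lambda>i. f i (x i)) \<longlongrightarrow> T (cls_L f) (cls_M x)) F"
proof -
  define f' where "f' = (SOME g. g \<in> cls_L f)"
  define x' where "x' = (SOME y. y \<in> cls_M x)"
  have f': "f' \<in> linf_L" "ult_pdist F (lip_dist UNIV dist) f f' = 0"
    unfolding f'_def by (rule L.some_in_ult_class[OF f])+
  have x': "x' \<in> linf_M" "ult_pdist F dist x x' = 0"
    unfolding x'_def by (rule M.some_in_ult_class[OF x])+
  have "cls_M x \<in> MU F z"
    using x unfolding ult_space_def by blast
  then have T: "T (cls_L f) (cls_M x) = Lim F (\<lambda>i. f' i (x' i))"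
    unfolding opT_def f'_def x'_def by simp
  have "((\<lambda>i. f' i (x' i) - (f' i (x' i) - f i (x i))) \<longlongrightarrow> Lim F (\<lambda>i. f' i (x' i)) - 0) F"
    by (intro tendsto_diff tendsto_Lim_eval tendsto_eval_cong f f' x x')
  then show ?thesis
    unfolding T by simp
qed

lemma opT_diff_lipschitz:
  assumes f1: "f1 \<in> linf_L" and f2: "f2 \<in> linf_L" and "\<xi> \<in> MU F z" "\<eta> \<in> MU F z"
  shows "\<bar>(T (cls_L f1) \<xi> - T (cls_L f2) \<xi>) - (T (cls_L f1) \<eta> - T (cls_L f2) \<eta>)\<bar>
    \<le> ult_pdist F (lip_dist UNIV dist) f1 f2 * dMU F \<xi> \<eta>"
proof -
  obtain x where x: "x \<in> linf_M" "\<xi> = cls_M x"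
    using assms(3) by (rule M.ult_spaceE)
  obtain y where y: "y \<in> linf_M" "\<eta> = cls_M y"
    using assms(4) by (rule M.ult_spaceE)
  have lhs: "((\<lambda>i. \<bar>(f1 i (x i) - f2 i (x i)) - (f1 i (y i) - f2 i (y i))\<bar>)
      \<longlongrightarrow> \<bar>(T (cls_L f1) \<xi> - T (cls_L f2) \<xi>) - (T (cls_L f1) \<eta> - T (cls_L f2) \<eta>)\<bar>) F"
    unfolding x(2) y(2) by (intro tendsto_rabs tendsto_diff tendsto_opT f1 f2 x(1) y(1))
  have rhs: "((\<lambda>i. lip_dist UNIV dist (f1 i) (f2 i) * dist (x i) (y i))
      \<longlongrightarrow> ult_pdist F (lip_dist UNIV dist) f1 f2 * dMU F \<xi> \<eta>) F"
    unfolding x(2) y(2) M.ult_dist_ult_class[OF x(1) y(1)]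
    by (intro tendsto_mult L.tendsto_ult_pdist M.tendsto_ult_pdist f1 f2 x(1) y(1))
  show ?thesis
    by (rule tendsto_le[OF L.not_bot rhs lhs])
      (auto intro!: always_eventually lip_dist_bound L.ult_linf_in[OF f1] L.ult_linf_in[OF f2])
qed

lemma lip_dist_opT_le:
  assumes "f1 \<in> linf_L" "f2 \<in> linf_L"
  shows "lip_dist (MU F z) (dMU F) (T (cls_L f1)) (T (cls_L f2)) \<le> ult_pdist F (lip_dist UNIV dist) f1 f2"
  unfolding lip_dist_def[of "MU F z"]
  using assms M.ult_dist_nonneg opT_diff_lipschitz L.ult_pdist_nonneg
  by (intro lip_const_least) auto

lemma lip_dist_opT_nonneg:
  assumes "f1 \<in> linf_L" "f2 \<in> linf_L"
  shows "0 \<le> lip_dist (MU F z) (dMU F) (T (cls_L f1)) (T (cls_L f2))"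
proof -
  have lipschitz: "\<forall>\<xi>\<in>MU F z. \<forall>\<eta>\<in>MU F z. \<bar>(T (cls_L f1) \<xi> - T (cls_L f2) \<xi>) - (T (cls_L f1) \<eta> - T (cls_L f2) \<eta>)\<bar>
      \<le> ult_pdist F (lip_dist UNIV dist) f1 f2 * dMU F \<xi> \<eta>"
    using opT_diff_lipschitz[OF assms] by blast
  show ?thesis
    unfolding lip_dist_def[of "MU F z"] by (rule lip_const_nonneg[OF M.ult_dist_nonneg lipschitz])
qed

lemma abs_opT_diff_le_lip_dist:
  assumes "f1 \<in> linf_L" "f2 \<in> linf_L" "\<xi> \<in> MU F z" "\<eta> \<in> MU F z"
  shows "\<bar>(T (cls_L f1) \<xi> - T (cls_L f2) \<xi>) - (T (cls_L f1) \<eta> - T (cls_L f2) \<eta>)\<bar>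
    \<le> lip_dist (MU F z) (dMU F) (T (cls_L f1)) (T (cls_L f2)) * dMU F \<xi> \<eta>"
proof -
  have lipschitz: "\<forall>\<xi>\<in>MU F z. \<forall>\<eta>\<in>MU F z. \<bar>(T (cls_L f1) \<xi> - T (cls_L f2) \<xi>) - (T (cls_L f1) \<eta> - T (cls_L f2) \<eta>)\<bar>
      \<le> ult_pdist F (lip_dist UNIV dist) f1 f2 * dMU F \<xi> \<eta>"
    using opT_diff_lipschitz[OF assms(1,2)] by blast
  show ?thesis
    unfolding lip_dist_def[of "MU F z"] by (rule lip_const_bound[OF M.ult_dist_nonneg lipschitz assms(3,4)])
qed

lemma abs_opT_diff_ge:
  assumes f1: "f1 \<in> linf_L" and f2: "f2 \<in> linf_L" and u: "u \<in> linf_M" and v: "v \<in> linf_M"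
    and approx: "\<And>i. (lip_dist UNIV dist (f1 i) (f2 i) - \<epsilon>) * dist (u i) (v i)
      \<le> \<bar>(f1 i (u i) - f2 i (u i)) - (f1 i (v i) - f2 i (v i))\<bar>"
  shows "(ult_pdist F (lip_dist UNIV dist) f1 f2 - \<epsilon>) * dMU F (cls_M u) (cls_M v)
    \<le> \<bar>(T (cls_L f1) (cls_M u) - T (cls_L f2) (cls_M u)) - (T (cls_L f1) (cls_M v) - T (cls_L f2) (cls_M v))\<bar>"
proof -
  have lhs: "((\<lambda>i. \<bar>(f1 i (u i) - f2 i (u i)) - (f1 i (v i) - f2 i (v i))\<bar>)
      \<longlongrightarrow> \<bar>(T (cls_L f1) (cls_M u) - T (cls_L f2) (cls_M u)) - (T (cls_L f1) (cls_M v) - T (cls_L f2) (cls_M v))\<bar>) F"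
    by (intro tendsto_rabs tendsto_diff tendsto_opT f1 f2 u v)
  have rhs: "((\<lambda>i. (lip_dist UNIV dist (f1 i) (f2 i) - \<epsilon>) * dist (u i) (v i))
      \<longlongrightarrow> (ult_pdist F (lip_dist UNIV dist) f1 f2 - \<epsilon>) * dMU F (cls_M u) (cls_M v)) F"
    unfolding M.ult_dist_ult_class[OF u v]
    by (intro tendsto_mult tendsto_diff tendsto_const L.tendsto_ult_pdist M.tendsto_ult_pdist f1 f2 u v)
  show ?thesis
    by (rule tendsto_le[OF L.not_bot lhs rhs]) (use approx in \<open>auto intro: always_eventually\<close>)
qed

text \<open>Pairs (u_i, v_i) nearly norming f1_i - f2_i stay delta apart, so their classes are distinct
  points of M_U and witness the slope lim_U ||f1_i - f2_i|| up to epsilon.\<close>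
lemma ult_pdist_le_lip_dist_opT:
  assumes "uniformly_discrete (UNIV::'a set)" and "bounded (UNIV::'a set)"
    and f1: "f1 \<in> linf_L" and f2: "f2 \<in> linf_L"
  shows "ult_pdist F (lip_dist UNIV dist) f1 f2 \<le> lip_dist (MU F z) (dMU F) (T (cls_L f1)) (T (cls_L f2))"
    (is "?\<Lambda> \<le> ?lip")
proof (cases "\<exists>u v::'a. u \<noteq> v")
  case False
  then have "lip_dist UNIV dist (f1 i) (f2 i) = 0" for i
    by (intro lip_dist_eq_0_if_subsingleton) blast
  then have "?\<Lambda> = 0"
    unfolding ult_pdist_def using L.not_bot by (simp add: tendsto_Lim)
  with lip_dist_opT_nonneg[OF f1 f2] show ?thesis by simp
next
  case True
  then obtain u\<^sub>0 v\<^sub>0 :: 'a where "u\<^sub>0 \<noteq> v\<^sub>0" by blast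
  obtain \<delta> where "0 < \<delta>" and \<delta>: "\<forall>x y::'a. x \<noteq> y \<longrightarrow> \<delta> \<le> dist x y"
    using assms(1) unfolding uniformly_discrete_def by auto
  note linf = ult_linf_if_bounded[OF assms(2)]
  show ?thesis
  proof (rule field_le_epsilon)
    fix \<epsilon> :: real assume "0 < \<epsilon>"
    have "\<forall>i. \<exists>u v. u \<noteq> v \<and> (lip_dist UNIV dist (f1 i) (f2 i) - \<epsilon>) * dist u v
        \<le> \<bar>(f1 i u - f2 i u) - (f1 i v - f2 i v)\<bar>"
      using lip_dist_approx[OF L.ult_linf_in[OF f1] L.ult_linf_in[OF f2] \<open>0 < \<epsilon>\<close> \<open>u\<^sub>0 \<noteq> v\<^sub>0\<close>]
      by blast
    then obtain u v :: "'i \<Rightarrow> 'a" where uv: "\<And>i. u i \<noteq> v i"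
      and approx: "\<And>i. (lip_dist UNIV dist (f1 i) (f2 i) - \<epsilon>) * dist (u i) (v i)
        \<le> \<bar>(f1 i (u i) - f2 i (u i)) - (f1 i (v i) - f2 i (v i))\<bar>"
      by (auto dest!: choice)
    have "cls_M u \<in> MU F z" "cls_M v \<in> MU F z"
      using linf unfolding ult_space_def by blast+
    have "\<delta> \<le> ult_pdist F dist u v"
      using uv \<delta> by (intro tendsto_lowerbound[OF M.tendsto_ult_pdist[OF linf linf]] always_eventually)
        (auto simp: L.not_bot)
    with \<open>0 < \<delta>\<close> have D_pos: "0 < dMU F (cls_M u) (cls_M v)"
      unfolding M.ult_dist_ult_class[OF linf linf] by linarith
    have "(?\<Lambda> - \<epsilon>) * dMU F (cls_M u) (cls_M v)
        \<le> \<bar>(T (cls_L f1) (cls_M u) - T (cls_L f2) (cls_M u)) - (T (cls_L f1) (cls_M v) - T (cls_L f2) (cls_M v))\<bar>"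
      by (rule abs_opT_diff_ge[OF f1 f2 linf linf approx])
    also have "\<dots> \<le> ?lip * dMU F (cls_M u) (cls_M v)"
      by (rule abs_opT_diff_le_lip_dist[OF f1 f2]) fact+
    finally show "?\<Lambda> \<le> ?lip + \<epsilon>"
      using D_pos by (simp add: mult_le_cancel_right)
  qed
qed

lemma opT_isometric_if_uniformly_discrete_bounded:
  assumes "uniformly_discrete (UNIV::'a set)" and "bounded (UNIV::'a set)"
    and "c1 \<in> LipU F z" "c2 \<in> LipU F z"
  shows "lip_dist (MU F z) (dMU F) (T c1) (T c2) = dLipU F c1 c2"
proof -
  obtain f1 where f1: "f1 \<in> linf_L" "c1 = cls_L f1"
    using assms(3) by (rule L.ult_spaceE)
  obtain f2 where f2: "f2 \<in> linf_L" "c2 = cls_L f2"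
    using assms(4) by (rule L.ult_spaceE)
  show ?thesis
    unfolding f1(2) f2(2) L.ult_dist_ult_class[OF f1(1) f2(1)]
    using lip_dist_opT_le[OF f1(1) f2(1)] ult_pdist_le_lip_dist_opT[OF assms(1,2) f1(1) f2(1)]
    by (rule antisym)
qed

lemma inj_on_opT_if_isometric:
  assumes "\<forall>c1\<in>LipU F z. \<forall>c2\<in>LipU F z. lip_dist (MU F z) (dMU F) (T c1) (T c2) = dLipU F c1 c2"
  shows "inj_on T (LipU F z)"
proof (rule inj_onI)
  fix c1 c2 assume c: "c1 \<in> LipU F z" "c2 \<in> LipU F z" and "T c1 = T c2"
  then have "lip_dist (MU F z) (dMU F) (T c1) (T c2) = 0"
    unfolding lip_dist_def[of "MU F z"] by (simp add: lip_const_eq_0I)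
  with assms c show "c1 = c2"
    using L.ult_dist_eq_0_iff by simp
qed

lemma not_inj_on_opT:
  assumes "annihilated_family F z h"
  shows "\<not> inj_on T (LipU F z)"
proof
  assume inj: "inj_on T (LipU F z)"
  have h: "h \<in> linf_L" and norm: "\<forall>i. 1/2 \<le> lip_norm (h i)"
    and null: "\<forall>x\<in>linf_M. ((\<lambda>i. h i (x i)) \<longlongrightarrow> 0) F"
    using assms unfolding annihilated_family_def ult_linf_def by auto
  have zero: "(\<lambda>_ _. 0) \<in> linf_L"
    unfolding ult_linf_def using zero_in_Lip0 L.refl[OF zero_in_Lip0] by auto
  have "T (cls_L h) \<xi> = T (cls_L (\<lambda>_ _. 0)) \<xi>" for \<xi>
  proof (cases "\<xi> \<in> MU F z")
    case True
    then obtain x where x: "x \<in> linf_M" "\<xi> = cls_M x"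
      by (rule M.ult_spaceE)
    have "T (cls_L h) \<xi> = 0"
      using tendsto_unique[OF L.not_bot tendsto_opT[OF h x(1)]] null x by simp
    moreover have "T (cls_L (\<lambda>_ _. 0)) \<xi> = 0"
      using tendsto_unique[OF L.not_bot tendsto_opT[OF zero x(1)] tendsto_const] x(2) by simp
    ultimately show ?thesis by simp
  qed (simp add: opT_def)
  moreover have "1/2 \<le> ult_pdist F (lip_dist UNIV dist) h (\<lambda>_ _. 0)"
    using norm by (intro tendsto_lowerbound[OF L.tendsto_ult_pdist[OF h zero]] always_eventually)
      (auto simp: L.not_bot)
  then have "cls_L h \<noteq> cls_L (\<lambda>_ _. 0)"
    using L.ult_class_eq_iff[OF h zero] by simp
  ultimately show False
    using inj h zero unfolding inj_on_def ult_space_def by blast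
qed

lemma uniformly_discrete_bounded_if_inj_on_opT:
  assumes "countably_incomplete F" and "inj_on T (LipU F z)"
  shows "uniformly_discrete (UNIV::'a set) \<and> bounded (UNIV::'a set)"
proof -
  obtain r :: "'i \<Rightarrow> nat" where r: "filterlim r at_top F"
    using countably_incomplete_filterlim_at_top[OF assms(1)] .
  show ?thesis
    using annihilated_family_if_unbounded[OF r] annihilated_family_if_not_uniformly_discrete[OF r]
      not_inj_on_opT assms(2) by blast
qed

end

theorem proposition3p2:
  fixes F :: "'i filter" and z :: "'a::metric_space"
  assumes "is_ultrafilter F" and "countably_incomplete F"
  shows "((uniformly_discrete (UNIV::'a set) \<and> bounded (UNIV::'a set))
            \<longleftrightarrow> inj_on (opT F z) (LipU F z))
       \<and> (inj_on (opT F z) (LipU F z)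
            \<longleftrightarrow> (\<forall>c1\<in>LipU F z. \<forall>c2\<in>LipU F z.
                   lip_dist (MU F z) (dMU F) (opT F z c1) (opT F z c2) = dLipU F c1 c2))"
proof -
  interpret Lip0_ultrapower F z
    by (rule Lip0_ultrapower.intro[OF assms(1)])
  show ?thesis
    using inj_on_opT_if_isometric uniformly_discrete_bounded_if_inj_on_opT[OF assms(2)]
      opT_isometric_if_uniformly_discrete_bounded by blast
qed

end
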